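(* There exist absolute constants $c>0$ and $d_0$ such that for all $d\ge d_0$, $\kappa\ge10$, $K\in\mathbb N$, $\eta\ge1$ and every $x_0\in\mathbb{R}^d$ the following holds. Let $f(x)=\frac\kappa2\|x\|_2^2$, $\mathcal H(x,v)=f(x)+\frac12\|v\|_2^2$, $v_0\sim\mathcal N(0,I_d)$, and let $(x_K,v_K)$ be obtained from $(x_0,v_0)$ by $K$ leapfrog steps $v_{k+1/2}=v_k-\frac\eta2\nabla f(x_k)$, $x_{k+1}=x_k+\eta v_{k+1/2}$, $v_{k+1}=v_{k+1/2}-\frac\eta2\nabla f(x_{k+1})$. Then with probability at least $1-d^{-5}$ over $v_0$, $\mathcal H(x_0,v_0)-\mathcal H(x_K,v_K)\le-c\,d$. *)

theory Defs
  imports "HOL-Probability.Probability"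
begin

text \<open>Vectors in R^d are represented as functions nat => real; only coordinates i < d matter.\<close>

definition sqnorm :: "nat \<Rightarrow> (nat \<Rightarrow> real) \<Rightarrow> real" where
  "sqnorm d x = (\<Sum>i<d. (x i)^2)"

definition fq :: "nat \<Rightarrow> real \<Rightarrow> (nat \<Rightarrow> real) \<Rightarrow> real" where
  "fq d \<kappa> x = \<kappa> / 2 * sqnorm d x"

definition grad_fq :: "real \<Rightarrow> (nat \<Rightarrow> real) \<Rightarrow> (nat \<Rightarrow> real)" where
  "grad_fq \<kappa> x = (\<lambda>i. \<kappa> * x i)"

definition Ham :: "nat \<Rightarrow> real \<Rightarrow> (nat \<Rightarrow> real) \<times> (nat \<Rightarrow> real) \<Rightarrow> real" where
  "Ham d \<kappa> xv = fq d \<kappa> (fst xv) + 1/2 * sqnorm d (snd xv)"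

definition leapfrog_step :: "real \<Rightarrow> real \<Rightarrow> (nat \<Rightarrow> real) \<times> (nat \<Rightarrow> real) \<Rightarrow> (nat \<Rightarrow> real) \<times> (nat \<Rightarrow> real)" where
  "leapfrog_step \<kappa> \<eta> xv =
     (let x = fst xv; v = snd xv;
          vh = (\<lambda>i. v i - \<eta> / 2 * grad_fq \<kappa> x i);
          x' = (\<lambda>i. x i + \<eta> * vh i);
          v' = (\<lambda>i. vh i - \<eta> / 2 * grad_fq \<kappa> x' i)
      in (x', v'))"

definition leapfrog :: "real \<Rightarrow> real \<Rightarrow> nat \<Rightarrow> (nat \<Rightarrow> real) \<times> (nat \<Rightarrow> real) \<Rightarrow> (nat \<Rightarrow> real) \<times> (nat \<Rightarrow> real)" where
  "leapfrog \<kappa> \<eta> K = (leapfrog_step \<kappa> \<eta> ^^ K)"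

definition std_gaussian :: "nat \<Rightarrow> (nat \<Rightarrow> real) measure" where
  "std_gaussian d = PiM {..<d} (\<lambda>_. density lborel std_normal_density)"

end

theory Submission
  imports Defs
begin

text \<open>
  For f = \<kappa>/2 |x|^2 leapfrog acts coordinatewise and linearly: in the variables (x, \<eta> v)
  one step is the matrix [[-t, 1], [t^2 - 1, -t]] with t = \<eta>^2 \<kappa>/2 - 1 \<ge> 4, and its K-th power
  is [[A, B], [(t^2 - 1) B, A]] with A^2 - (t^2 - 1) B^2 = 1 and, for K \<ge> 1, B^2 \<ge> 1.
  The energy gain H(x_K, v_K) - H(x_0, v_0) is therefore a sum of independent quadratic forms
  \<Delta>H_i in the Gaussian velocities, and 3/5 \<Delta>H_i + v^2/2 \<ge> g (v - m)^2 with g \<ge> 8.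
  So E exp(-3/5 \<Delta>H_i) \<le> 1/sqrt(2 g) \<le> 1/4, and a Chernoff bound shows that the gain
  is below d/2 with probability at most e^(3d/10) 4^(-d) \<le> 2^(-d) \<le> d^(-5).
\<close>

lemma pow5_le_two_pow: "n \<ge> 23 \<Longrightarrow> (n::nat)^5 \<le> 2^n"
proof (induction n rule: dec_induct)
  case (step n)
  have "(8 * Suc n)^5 \<le> (9 * n)^5"
    using step(1) by (intro power_mono) simp_all
  then have "8^5 * (Suc n)^5 \<le> (9 * n)^5" by (simp only: power_mult_distrib)
  also have "\<dots> \<le> 8^5 * (2 * n^5)" by (simp add: power_mult_distrib)
  finally have "(Suc n)^5 \<le> 2 * n^5" by simp
  with step show ?case by simp
qed simp

lemma exp_mult_quarter_pow_le:
  assumes "d \<ge> 23"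
  shows "exp (3/10 * real d) * (1/4)^d \<le> 1 / real d ^ 5"
proof -
  have "exp (3/10 :: real) \<le> 2" using exp_bound_lemma[of "3/10 :: real"] by simp
  then have "exp (3/10) ^ d \<le> (2::real)^d" by (rule power_mono) simp
  then have "exp (3/10 * real d) \<le> 2^d" by (simp add: mult.commute flip: exp_of_nat_mult)
  then have "exp (3/10 * real d) * (1/4)^d \<le> 2^d * (1/4)^d" by simp
  also have "\<dots> = 1 / 2^d"
  proof -
    have "(4::real)^d = 2^d * 2^d" by (simp flip: power_mult_distrib)
    then show ?thesis by (simp add: power_one_over)
  qed
  also have "\<dots> \<le> 1 / real d ^ 5"
  proof -
    have "real d ^ 5 \<le> 2^d"
      using pow5_le_two_pow[OF assms] by (metis of_nat_le_iff of_nat_numeral of_nat_power)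
    then show ?thesis using assms by (intro divide_left_mono) auto
  qed
  finally show ?thesis .
qed

lemma nn_integral_std_normal_exp_le:
  fixes q :: "real \<Rightarrow> real"
  assumes "g > 0" and quad: "\<And>v. q v + v^2 / 2 \<ge> g * (v - m)^2"
  shows "(\<integral>\<^sup>+ v. ennreal (exp (- q v)) \<partial>density lborel std_normal_density)
           \<le> ennreal (1 / sqrt (2 * g))"
proof -
  define \<sigma> where "\<sigma> = sqrt (1 / (2 * g))"
  have "\<sigma> > 0" using \<open>g > 0\<close> by (simp add: \<sigma>_def)
  have density_eq: "std_normal_density v * exp (v^2 / 2 - g * (v - m)^2)
                    = 1 / sqrt (2 * g) * normal_density m \<sigma> v" for v
  proof -
    have var: "2 * \<sigma>^2 = 1 / g" using \<open>g > 0\<close> by (simp add: \<sigma>_def)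
    then have "2 * pi * \<sigma>^2 = pi / g" by (simp add: mult.assoc mult.left_commute)
    then have "normal_density m \<sigma> v = exp (- g * (v - m)^2) / sqrt (pi / g)"
      unfolding normal_density_def var by simp
    then show ?thesis
      using \<open>g > 0\<close>
      by (simp add: std_normal_density_def real_sqrt_mult real_sqrt_divide field_simps
          flip: exp_add)
  qed
  have "(\<integral>\<^sup>+ v. ennreal (exp (- q v)) \<partial>density lborel std_normal_density)
      \<le> (\<integral>\<^sup>+ v. ennreal (exp (v^2 / 2 - g * (v - m)^2)) \<partial>density lborel std_normal_density)"
  proof (intro nn_integral_mono ennreal_leI)
    show "exp (- q v) \<le> exp (v^2 / 2 - g * (v - m)^2)" for v
      by (subst exp_le_cancel_iff) (use quad[of v] in linarith)
  qed
  also have "\<dots> = (\<integral>\<^sup>+ v. ennreal (1 / sqrt (2 * g) * normal_density m \<sigma> v) \<partial>lborel)"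
    by (simp add: nn_integral_density density_eq flip: ennreal_mult')
  also have "\<dots> = ennreal (1 / sqrt (2 * g)) * emeasure (density lborel (normal_density m \<sigma>)) UNIV"
    using \<open>g > 0\<close>
    by (subst ennreal_mult) (auto simp: nn_integral_cmult emeasure_density)
  also have "\<dots> = ennreal (1 / sqrt (2 * g))"
    using prob_space.emeasure_space_1[OF prob_space_normal_density] \<open>\<sigma> > 0\<close> by simp
  finally show ?thesis .
qed

lemma PiM_sum_lower_tail:
  fixes f :: "'i \<Rightarrow> real \<Rightarrow> real" and q :: ennreal
  assumes "prob_space N" and "finite I" and "s > 0"
    and [measurable]: "\<And>i. i \<in> I \<Longrightarrow> f i \<in> borel_measurable N"
    and mgf: "\<And>i. i \<in> I \<Longrightarrow> (\<integral>\<^sup>+ x. ennreal (exp (- s * f i x)) \<partial>N) \<le> q"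
  shows "emeasure (PiM I (\<lambda>_. N)) {v \<in> space (PiM I (\<lambda>_. N)). (\<Sum>i\<in>I. f i (v i)) \<le> a}
           \<le> ennreal (exp (s * a)) * q ^ card I"
proof -
  interpret product_prob_space "\<lambda>_. N"
    using \<open>prob_space N\<close> by (rule product_prob_spaceI)
  let ?M = "PiM I (\<lambda>_. N)"
  have "(\<integral>\<^sup>+ v. ennreal (exp (- s * (\<Sum>i\<in>I. f i (v i)))) * indicator (space ?M) v \<partial>?M)
      = (\<integral>\<^sup>+ v. (\<Prod>i\<in>I. ennreal (exp (- s * f i (v i)))) \<partial>?M)"
    using \<open>finite I\<close>
    by (intro nn_integral_cong) (simp add: sum_distrib_left exp_sum prod_ennreal flip: sum_negf)
  also have "\<dots> = (\<Prod>i\<in>I. \<integral>\<^sup>+ x. ennreal (exp (- s * f i x)) \<partial>N)"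
    using \<open>finite I\<close> by (intro product_nn_integral_prod) auto
  also have "\<dots> \<le> q ^ card I"
    using mgf prod_mono_ennreal[of I _ "\<lambda>_. q"] by simp
  finally have mgf_sum:
    "(\<integral>\<^sup>+ v. ennreal (exp (- s * (\<Sum>i\<in>I. f i (v i)))) * indicator (space ?M) v \<partial>?M) \<le> q ^ card I" .
  have "emeasure ?M {v \<in> space ?M. (\<Sum>i\<in>I. f i (v i)) \<le> a}
      \<le> ennreal (exp (s * a)) *
          (\<integral>\<^sup>+ v. ennreal (exp (- s * (\<Sum>i\<in>I. f i (v i)))) * indicator (space ?M) v \<partial>?M)"
    using \<open>s > 0\<close> by (intro Chernoff_ineq_nn_integral_le) auto
  also have "\<dots> \<le> ennreal (exp (s * a)) * q ^ card I"
    using mgf_sum by (rule mult_left_mono) simp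
  finally show ?thesis .
qed

fun leapfrog_coeffs :: "real \<Rightarrow> nat \<Rightarrow> real \<times> real" where
  "leapfrog_coeffs t 0 = (1, 0)"
| "leapfrog_coeffs t (Suc n) =
     (let (A, B) = leapfrog_coeffs t n in (- t * A + (t^2 - 1) * B, A - t * B))"

lemma leapfrog_coeffs_det:
  "(fst (leapfrog_coeffs t n))^2 - (t^2 - 1) * (snd (leapfrog_coeffs t n))^2 = 1"
proof (induction n)
  case (Suc n)
  then show ?case
    by (simp add: split_beta Let_def) (simp add: algebra_simps power2_eq_square)
qed simp

lemma leapfrog_coeffs_sign_growth:
  assumes "t \<ge> 1"
  shows "fst (leapfrog_coeffs t n) * snd (leapfrog_coeffs t n) \<le> 0 \<and>
         (n \<ge> 1 \<longrightarrow> (snd (leapfrog_coeffs t n))^2 \<ge> 1)"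
proof (induction n)
  case (Suc n)
  obtain A B where AB: "leapfrog_coeffs t n = (A, B)" by fastforce
  have AB_nonpos: "A * B \<le> 0" using Suc AB by simp
  have det: "A^2 = 1 + (t^2 - 1) * B^2" using leapfrog_coeffs_det[of t n] AB by simp
  have t2: "t^2 \<ge> 1" using assms by simp
  have "(- t * A + (t^2 - 1) * B) * (A - t * B)
        = - t * A^2 + (2 * t^2 - 1) * (A * B) - t * (t^2 - 1) * B^2"
    by (simp add: algebra_simps power2_eq_square)
  also have "\<dots> \<le> 0"
  proof -
    have "(2 * t^2 - 1) * (A * B) \<le> 0" using t2 AB_nonpos by (simp add: mult_nonneg_nonpos)
    moreover have "t * (t^2 - 1) * B^2 \<ge> 0" using assms t2 by simp
    moreover have "t * A^2 \<ge> 0" using assms by simp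
    ultimately show ?thesis by linarith
  qed
  finally have sign: "(- t * A + (t^2 - 1) * B) * (A - t * B) \<le> 0" .
  have "(A - t * B)^2 = A^2 - 2 * t * (A * B) + t^2 * B^2"
    by (simp add: algebra_simps power2_eq_square)
  moreover have "t * (A * B) \<le> 0" using assms AB_nonpos by (simp add: mult_nonneg_nonpos)
  moreover have "A^2 \<ge> 1" using det t2 by simp
  moreover have "t^2 * B^2 \<ge> 0" by simp
  ultimately have "(A - t * B)^2 \<ge> 1" by linarith
  with sign show ?case by (simp add: AB)
qed simp

lemma leapfrog_closed_form:
  fixes \<kappa> \<eta> :: real
  defines "t \<equiv> \<eta>^2 * \<kappa> / 2 - 1"
  shows "leapfrog \<kappa> \<eta> K (x, v) =
    (let (A, B) = leapfrog_coeffs t K in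
      (\<lambda>i. A * x i + B * \<eta> * v i,
       \<lambda>i. B * \<eta> * \<kappa> * (\<eta>^2 * \<kappa> / 4 - 1) * x i + A * v i))"
proof (induction K)
  case 0
  then show ?case by (simp add: leapfrog_def)
next
  case (Suc K)
  obtain A B where AB: "leapfrog_coeffs t K = (A, B)" by fastforce
  have "leapfrog \<kappa> \<eta> (Suc K) (x, v) = leapfrog_step \<kappa> \<eta> (leapfrog \<kappa> \<eta> K (x, v))"
    by (simp add: leapfrog_def)
  also have "\<dots> = leapfrog_step \<kappa> \<eta> (\<lambda>i. A * x i + B * \<eta> * v i,
       \<lambda>i. B * \<eta> * \<kappa> * (\<eta>^2 * \<kappa> / 4 - 1) * x i + A * v i)"
    using Suc AB by simp
  finally show ?case
    by (simp add: AB leapfrog_step_def grad_fq_def fun_eq_iff) (simp add: t_def field_simps power2_eq_square)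
qed

definition leapfrog_energy_change :: "real \<Rightarrow> real \<Rightarrow> real \<Rightarrow> real \<Rightarrow> real \<Rightarrow> real \<Rightarrow> real" where
  "leapfrog_energy_change \<kappa> \<eta> A B x v =
     (\<kappa> * (A * x + B * \<eta> * v)^2 + (B * \<eta> * \<kappa> * (\<eta>^2 * \<kappa> / 4 - 1) * x + A * v)^2
      - \<kappa> * x^2 - v^2) / 2"

lemma Ham_eq_sum: "Ham d \<kappa> (x, v) = (\<Sum>i<d. (\<kappa> * (x i)^2 + (v i)^2) / 2)"
  by (simp add: Ham_def fq_def sqnorm_def sum_distrib_left sum.distrib add_divide_distrib
      flip: sum_divide_distrib)

lemma Ham_leapfrog_diff:
  assumes "leapfrog_coeffs (\<eta>^2 * \<kappa> / 2 - 1) K = (A, B)"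
  shows "Ham d \<kappa> (x, v) - Ham d \<kappa> (leapfrog \<kappa> \<eta> K (x, v)) =
           - (\<Sum>i<d. leapfrog_energy_change \<kappa> \<eta> A B (x i) (v i))"
  using assms
  by (simp add: leapfrog_closed_form Ham_eq_sum leapfrog_energy_change_def flip: sum_subtractf sum_negf)
     (rule sum.cong; simp add: field_simps)

lemma borel_measurable_leapfrog_energy_change [measurable]:
  "leapfrog_energy_change \<kappa> \<eta> A B x \<in> borel_measurable borel"
  unfolding leapfrog_energy_change_def by measurable

lemma leapfrog_energy_change_quadratic_bound:
  fixes \<kappa> \<eta> A B x :: real
  assumes "\<kappa> > 0" and h10: "\<eta>^2 * \<kappa> \<ge> 10"
    and det: "A^2 - ((\<eta>^2 * \<kappa> / 2 - 1)^2 - 1) * B^2 = 1" and B1: "B^2 \<ge> 1"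
  obtains g m where "g \<ge> 8"
    and "\<And>v. 3/5 * leapfrog_energy_change \<kappa> \<eta> A B x v + v^2 / 2 \<ge> g * (v - m)^2"
proof -
  define h where "h = \<eta>^2 * \<kappa>"
  define D11 where "D11 = \<kappa> * B^2 * h^2 * (h - 4) / 16"
  define D12 where "D12 = A * \<eta> * B * \<kappa> * h / 4"
  define D22 where "D22 = B^2 * h^2 / 4"
  define g where "g = 3/10 * D22 + 1/2"
  have A2: "A^2 = 1 + (h^2/4 - h) * B^2"
    using det unfolding h_def by (simp add: power2_eq_square algebra_simps)
  have expand: "leapfrog_energy_change \<kappa> \<eta> A B x v = (D11 * x^2 + 2 * D12 * x * v + D22 * v^2) / 2"
    for v
  proof -
    have "leapfrog_energy_change \<kappa> \<eta> A B x v =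
        ((\<kappa> * (A^2 - 1) + (B * \<eta> * \<kappa> * (h / 4 - 1))^2) * x^2
        + 2 * (\<kappa> * A * B * \<eta> + B * \<eta> * \<kappa> * (h / 4 - 1) * A) * x * v
        + (\<kappa> * B^2 * \<eta>^2 + A^2 - 1) * v^2) / 2"
      unfolding leapfrog_energy_change_def h_def by (simp add: field_simps power2_eq_square)
    then show ?thesis
      unfolding A2 D11_def D12_def D22_def h_def by (simp add: field_simps power2_eq_square)
  qed
  have h2: "h^2 \<ge> 100"
    using h10 mult_mono[of 10 h 10 h] unfolding h_def by (simp add: power2_eq_square)
  have g8: "g \<ge> 8"
    using mult_mono[OF B1 h2] unfolding g_def D22_def by simp
  have D12_sq: "D12^2 = A^2 * B^2 * \<kappa> * h^3 / 16"
    unfolding D12_def h_def by (simp add: power2_eq_square power3_eq_cube field_simps)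
  have disc: "3/10 * D11 * g - (3/10 * D12)^2 = 3/10 * \<kappa> * B^2 * h^2 / 32 * (4/10 * h - 4)"
    unfolding g_def D11_def D22_def power_mult_distrib D12_sq A2
    by (simp add: field_simps power2_eq_square power3_eq_cube)
  have disc_nonneg: "3/10 * D11 * g - (3/10 * D12)^2 \<ge> 0"
    unfolding disc using \<open>\<kappa> > 0\<close> h10 by (intro mult_nonneg_nonneg) (auto simp: h_def mult.commute)
  show thesis
  proof (rule that[OF g8])
    fix v
    have "g * (3/5 * leapfrog_energy_change \<kappa> \<eta> A B x v + v^2 / 2) - (g * v + 3/10 * D12 * x)^2
          = (3/10 * D11 * g - (3/10 * D12)^2) * x^2"
      unfolding expand g_def by (simp add: algebra_simps power2_eq_square)
    also have "\<dots> \<ge> 0" using disc_nonneg by simp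
    finally have "(g * v + 3/10 * D12 * x)^2 \<le> g * (3/5 * leapfrog_energy_change \<kappa> \<eta> A B x v + v^2 / 2)"
      by simp
    moreover have "(g * v + 3/10 * D12 * x)^2 = g * (g * (v - (- 3/10 * D12 * x / g))^2)"
      using g8 by (simp add: field_simps power2_eq_square)
    ultimately show "3/5 * leapfrog_energy_change \<kappa> \<eta> A B x v + v^2 / 2 \<ge> g * (v - (- 3/10 * D12 * x / g))^2"
      using g8 by simp
  qed
qed

lemma leapfrog_energy_change_exp_moment:
  fixes \<kappa> \<eta> A B x :: real
  assumes "\<kappa> > 0" and "\<eta>^2 * \<kappa> \<ge> 10"
    and "A^2 - ((\<eta>^2 * \<kappa> / 2 - 1)^2 - 1) * B^2 = 1" and "B^2 \<ge> 1"
  shows "(\<integral>\<^sup>+ v. ennreal (exp (- (3/5) * leapfrog_energy_change \<kappa> \<eta> A B x v))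
            \<partial>density lborel std_normal_density) \<le> ennreal (1/4)"
proof -
  obtain g m where "g \<ge> 8"
    and quad: "\<And>v. 3/5 * leapfrog_energy_change \<kappa> \<eta> A B x v + v^2 / 2 \<ge> g * (v - m)^2"
    using leapfrog_energy_change_quadratic_bound[OF assms] by blast
  have "(\<integral>\<^sup>+ v. ennreal (exp (- (3/5) * leapfrog_energy_change \<kappa> \<eta> A B x v))
            \<partial>density lborel std_normal_density) \<le> ennreal (1 / sqrt (2 * g))"
    using nn_integral_std_normal_exp_le[OF _ quad] \<open>g \<ge> 8\<close> by simp
  also have "\<dots> \<le> ennreal (1/4)"
  proof (rule ennreal_leI)
    have "sqrt 16 \<le> sqrt (2 * g)" using \<open>g \<ge> 8\<close> by (intro real_sqrt_le_mono) simp
    then show "1 / sqrt (2 * g) \<le> 1/4" using \<open>g \<ge> 8\<close> by (simp add: divide_le_eq)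
  qed
  finally show ?thesis .
qed

lemma prob_space_std_gaussian: "prob_space (std_gaussian d)"
  unfolding std_gaussian_def by (intro prob_space_PiM prob_space_normal_density) simp

lemma leapfrog_energy_change_sum_ge:
  fixes \<kappa> \<eta> A B :: real
  assumes "\<kappa> > 0" and "\<eta>^2 * \<kappa> \<ge> 10"
    and "A^2 - ((\<eta>^2 * \<kappa> / 2 - 1)^2 - 1) * B^2 = 1" and "B^2 \<ge> 1" and "d \<ge> 23"
  shows "measure (std_gaussian d)
           {v \<in> space (std_gaussian d). (\<Sum>i<d. leapfrog_energy_change \<kappa> \<eta> A B (x i) (v i)) \<ge> real d / 2}
         \<ge> 1 - 1 / real d ^ 5"
proof -
  let ?M = "std_gaussian d"
  let ?E = "\<lambda>v. \<Sum>i<d. leapfrog_energy_change \<kappa> \<eta> A B (x i) (v i)"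
  interpret prob_space ?M by (rule prob_space_std_gaussian)
  have "emeasure ?M {v \<in> space ?M. ?E v \<le> real d / 2}
      \<le> ennreal (exp (3/5 * (real d / 2))) * ennreal (1/4) ^ card {..<d}"
    unfolding std_gaussian_def using leapfrog_energy_change_exp_moment[OF assms(1-4)]
    by (intro PiM_sum_lower_tail prob_space_normal_density) auto
  also have "\<dots> = ennreal (exp (3/10 * real d) * (1/4)^d)"
    by (simp add: ennreal_power ennreal_mult)
  finally have "measure ?M {v \<in> space ?M. ?E v \<le> real d / 2} \<le> exp (3/10 * real d) * (1/4)^d"
    by (simp add: emeasure_eq_measure)
  also have "\<dots> \<le> 1 / real d ^ 5"
    using \<open>d \<ge> 23\<close> by (rule exp_mult_quarter_pow_le)
  finally have tail: "measure ?M {v \<in> space ?M. ?E v \<le> real d / 2} \<le> 1 / real d ^ 5" .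
  have [measurable]: "?E \<in> borel_measurable ?M"
    unfolding std_gaussian_def by measurable
  have "measure ?M {v \<in> space ?M. ?E v < real d / 2} \<le> measure ?M {v \<in> space ?M. ?E v \<le> real d / 2}"
    by (intro finite_measure_mono) auto
  moreover have "{v \<in> space ?M. ?E v \<ge> real d / 2} = space ?M - {v \<in> space ?M. ?E v < real d / 2}"
    by auto
  ultimately show ?thesis using tail by (simp add: prob_compl)
qed

theorem lemma15:
  shows "\<exists>c::real > 0. \<exists>d0::nat. \<forall>d::nat \<ge> d0. \<forall>\<kappa>::real \<ge> 10. \<forall>K::nat \<ge> 1. \<forall>\<eta>::real \<ge> 1.
    \<forall>x0::nat \<Rightarrow> real.
      measure (std_gaussian d)
        {v \<in> space (std_gaussian d).
           Ham d \<kappa> (x0, v) - Ham d \<kappa> (leapfrog \<kappa> \<eta> K (x0, v)) \<le> - c * real d}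
      \<ge> 1 - 1 / real d ^ 5"
proof (intro exI[of _ "1/2"] conjI exI[of _ "23::nat"] allI impI)
  fix d :: nat and \<kappa> :: real and K :: nat and \<eta> :: real and x0 :: "nat \<Rightarrow> real"
  assume "d \<ge> 23" "\<kappa> \<ge> 10" "K \<ge> 1" "\<eta> \<ge> 1"
  obtain A B where AB: "leapfrog_coeffs (\<eta>^2 * \<kappa> / 2 - 1) K = (A, B)" by fastforce
  have h10: "\<eta>^2 * \<kappa> \<ge> 10"
    using \<open>\<kappa> \<ge> 10\<close> \<open>\<eta> \<ge> 1\<close> mult_mono[of 1 "\<eta>^2" 10 \<kappa>] by simp
  have "A^2 - ((\<eta>^2 * \<kappa> / 2 - 1)^2 - 1) * B^2 = 1"
    using leapfrog_coeffs_det AB by (metis fst_conv snd_conv)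
  moreover have "B^2 \<ge> 1"
    using leapfrog_coeffs_sign_growth[of "\<eta>^2 * \<kappa> / 2 - 1" K] AB \<open>K \<ge> 1\<close> h10 by simp
  ultimately have "measure (std_gaussian d) {v \<in> space (std_gaussian d).
      (\<Sum>i<d. leapfrog_energy_change \<kappa> \<eta> A B (x0 i) (v i)) \<ge> real d / 2} \<ge> 1 - 1 / real d ^ 5"
    using \<open>\<kappa> \<ge> 10\<close> h10 \<open>d \<ge> 23\<close> by (intro leapfrog_energy_change_sum_ge) auto
  then show "measure (std_gaussian d) {v \<in> space (std_gaussian d).
      Ham d \<kappa> (x0, v) - Ham d \<kappa> (leapfrog \<kappa> \<eta> K (x0, v)) \<le> - (1/2) * real d} \<ge> 1 - 1 / real d ^ 5"
    by (simp add: Ham_leapfrog_diff[OF AB])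
qed simp

end
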